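(* Let $\mathcal{C}$ be a category and let $(S,\pi_0,\pi_1,\sigma)$ be a pre-summability structure on $\mathcal{C}$. Let $Z,Y$ be objects and $f_0,f_1,g_0,g_1:Z\to Y$ morphisms such that $(f_0,f_1)$ and $(g_0,g_1)$ are summable, and such that the witnesses $\langle f_0,f_1\rangle,\langle g_0,g_1\rangle : Z\to SY$ are themselves summable. Then for each $i\in\{0,1\}$ the pair $(f_i,g_i)$ is summable, the pair $(f_0+g_0,\,f_1+g_1)$ is summable, and $$\langle f_0,f_1\rangle+\langle g_0,g_1\rangle=\langle f_0+g_0,\;f_1+g_1\rangle .$$
   Context: Assume that for every pair of objects $X,Y$ of $\mathcal{C}$ a distinguished morphism $0_{X,Y}\in\mathcal{C}(X,Y)$ is given. A pre-summability structure on $\mathcal{C}$ is a tuple $(S,\pi_0,\pi_1,\sigma)$ consisting of the following data. First, an endofunctor $S:\mathcal{C}\to\mathcal{C}$ with $S(0_{X,Y})=0_{SX,SY}$ for all $X,Y$. Second, natural transformations $\pi_0,\pi_1,\sigma:S\Rightarrow \mathrm{Id}$. The projections $\pi_0,\pi_1$ must be jointly monic: for $f,g:Y\to SX$, if $\pi_0\circ f=\pi_0\circ g$ and $\pi_1\circ f=\pi_1\circ g$ then $f=g$. Two morphisms $f_0,f_1:X\to Y$ are called summable if there exists $h:X\to SY$ with $\pi_0\circ h=f_0$ and $\pi_1\circ h=f_1$. Such an $h$ is unique by joint monicity; it is called the witness and is written $\langle f_0,f_1\rangle$. In that case the sum is defined as $f_0+f_1:=\sigma_Y\circ\langle f_0,f_1\rangle$.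 *)

theory Defs
  imports Main
begin

text \<open>A category presented by a set of objects, hom-sets, composition
  (cmp g f = g after f) and identities.\<close>
record ('o, 'm) cat =
  Ob  :: "'o set"
  Hom :: "'o \<Rightarrow> 'o \<Rightarrow> 'm set"
  cmp :: "'m \<Rightarrow> 'm \<Rightarrow> 'm"
  idm :: "'o \<Rightarrow> 'm"

definition category :: "('o, 'm) cat \<Rightarrow> bool" where
  "category C \<longleftrightarrow>
     (\<forall>X Y f. f \<in> Hom C X Y \<longrightarrow> X \<in> Ob C \<and> Y \<in> Ob C) \<and>
     (\<forall>X \<in> Ob C. idm C X \<in> Hom C X X) \<and>
     (\<forall>X Y Z f g. f \<in> Hom C X Y \<longrightarrow> g \<in> Hom C Y Z \<longrightarrow> cmp C g f \<in> Hom C X Z) \<and>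
     (\<forall>W X Y Z f g h. f \<in> Hom C W X \<longrightarrow> g \<in> Hom C X Y \<longrightarrow> h \<in> Hom C Y Z \<longrightarrow>
        cmp C h (cmp C g f) = cmp C (cmp C h g) f) \<and>
     (\<forall>X Y f. f \<in> Hom C X Y \<longrightarrow> cmp C (idm C Y) f = f \<and> cmp C f (idm C X) = f)"

text \<open>Data of a pre-summability structure together with the distinguished
  morphisms: zero X Y, the endofunctor (SO on objects, SM on morphisms),
  and the components of the natural transformations pi0, pi1, sigma.\<close>
record ('o, 'm) presum_data =
  zer :: "'o \<Rightarrow> 'o \<Rightarrow> 'm"
  SO  :: "'o \<Rightarrow> 'o"
  SM  :: "'m \<Rightarrow> 'm"
  p0  :: "'o \<Rightarrow> 'm"
  p1  :: "'o \<Rightarrow> 'm"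
  sg  :: "'o \<Rightarrow> 'm"

definition endofunctor :: "('o, 'm) cat \<Rightarrow> ('o \<Rightarrow> 'o) \<Rightarrow> ('m \<Rightarrow> 'm) \<Rightarrow> bool" where
  "endofunctor C FO FM \<longleftrightarrow>
     (\<forall>X \<in> Ob C. FO X \<in> Ob C) \<and>
     (\<forall>X Y f. f \<in> Hom C X Y \<longrightarrow> FM f \<in> Hom C (FO X) (FO Y)) \<and>
     (\<forall>X Y Z f g. f \<in> Hom C X Y \<longrightarrow> g \<in> Hom C Y Z \<longrightarrow>
        FM (cmp C g f) = cmp C (FM g) (FM f)) \<and>
     (\<forall>X \<in> Ob C. FM (idm C X) = idm C (FO X))"

definition nat_trans_to_id :: "('o, 'm) cat \<Rightarrow> ('o \<Rightarrow> 'o) \<Rightarrow> ('m \<Rightarrow> 'm) \<Rightarrow> ('o \<Rightarrow> 'm) \<Rightarrow> bool" where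
  "nat_trans_to_id C FO FM \<eta> \<longleftrightarrow>
     (\<forall>X \<in> Ob C. \<eta> X \<in> Hom C (FO X) X) \<and>
     (\<forall>X Y f. f \<in> Hom C X Y \<longrightarrow> cmp C (\<eta> Y) (FM f) = cmp C f (\<eta> X))"

definition pre_summability :: "('o, 'm) cat \<Rightarrow> ('o, 'm) presum_data \<Rightarrow> bool" where
  "pre_summability C P \<longleftrightarrow>
     (\<forall>X \<in> Ob C. \<forall>Y \<in> Ob C. zer P X Y \<in> Hom C X Y) \<and>
     endofunctor C (SO P) (SM P) \<and>
     (\<forall>X \<in> Ob C. \<forall>Y \<in> Ob C. SM P (zer P X Y) = zer P (SO P X) (SO P Y)) \<and>
     nat_trans_to_id C (SO P) (SM P) (p0 P) \<and>
     nat_trans_to_id C (SO P) (SM P) (p1 P) \<and>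
     nat_trans_to_id C (SO P) (SM P) (sg P) \<and>
     (\<forall>X Y f g. f \<in> Hom C Y (SO P X) \<longrightarrow> g \<in> Hom C Y (SO P X) \<longrightarrow>
        cmp C (p0 P X) f = cmp C (p0 P X) g \<longrightarrow> cmp C (p1 P X) f = cmp C (p1 P X) g \<longrightarrow> f = g)"

definition summable :: "('o, 'm) cat \<Rightarrow> ('o, 'm) presum_data \<Rightarrow> 'o \<Rightarrow> 'o \<Rightarrow> 'm \<Rightarrow> 'm \<Rightarrow> bool" where
  "summable C P X Y f0 f1 \<longleftrightarrow> f0 \<in> Hom C X Y \<and> f1 \<in> Hom C X Y \<and>
     (\<exists>h \<in> Hom C X (SO P Y). cmp C (p0 P Y) h = f0 \<and> cmp C (p1 P Y) h = f1)"

definition witness :: "('o, 'm) cat \<Rightarrow> ('o, 'm) presum_data \<Rightarrow> 'o \<Rightarrow> 'o \<Rightarrow> 'm \<Rightarrow> 'm \<Rightarrow> 'm" where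
  "witness C P X Y f0 f1 = (THE h. h \<in> Hom C X (SO P Y) \<and>
     cmp C (p0 P Y) h = f0 \<and> cmp C (p1 P Y) h = f1)"

definition psum :: "('o, 'm) cat \<Rightarrow> ('o, 'm) presum_data \<Rightarrow> 'o \<Rightarrow> 'o \<Rightarrow> 'm \<Rightarrow> 'm \<Rightarrow> 'm" where
  "psum C P X Y f0 f1 = cmp C (sg P Y) (witness C P X Y f0 f1)"

end

theory Submission
  imports Defs
begin

text \<open>Summation commutes with post-composition: if \<open>h\<close> witnesses \<open>(f\<^sub>0, f\<^sub>1)\<close> then, by
  naturality of \<open>\<pi>\<^sub>0, \<pi>\<^sub>1, \<sigma>\<close>, \<open>S q \<circ> h\<close> witnesses \<open>(q \<circ> f\<^sub>0, q \<circ> f\<^sub>1)\<close> and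
  \<open>q \<circ> f\<^sub>0 + q \<circ> f\<^sub>1 = q \<circ> (f\<^sub>0 + f\<^sub>1)\<close>.  Taking \<open>q = \<pi>\<^sub>i\<close> and \<open>h\<close> the witness of
  \<open>\<langle>f\<^sub>0,f\<^sub>1\<rangle>, \<langle>g\<^sub>0,g\<^sub>1\<rangle>\<close> shows that \<open>(f\<^sub>i, g\<^sub>i)\<close> is summable with
  \<open>f\<^sub>i + g\<^sub>i = \<pi>\<^sub>i \<circ> (\<langle>f\<^sub>0,f\<^sub>1\<rangle> + \<langle>g\<^sub>0,g\<^sub>1\<rangle>)\<close>; by joint monicity the sum
  \<open>\<langle>f\<^sub>0,f\<^sub>1\<rangle> + \<langle>g\<^sub>0,g\<^sub>1\<rangle>\<close> is then the witness of \<open>(f\<^sub>0 + g\<^sub>0, f\<^sub>1 + g\<^sub>1)\<close>.\<close>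

locale pre_summable_category =
  fixes C :: "('o, 'm) cat" and P :: "('o, 'm) presum_data"
  assumes category: "category C"
    and pre_summability: "pre_summability C P"
begin

lemma cmp_in_Hom: "f \<in> Hom C X Y \<Longrightarrow> g \<in> Hom C Y Z \<Longrightarrow> cmp C g f \<in> Hom C X Z"
  using category unfolding category_def by blast

lemma cmp_assoc:
  "f \<in> Hom C W X \<Longrightarrow> g \<in> Hom C X Y \<Longrightarrow> h \<in> Hom C Y Z \<Longrightarrow>
    cmp C h (cmp C g f) = cmp C (cmp C h g) f"
  using category unfolding category_def by blast

lemma Hom_dom_in_Ob: "f \<in> Hom C X Y \<Longrightarrow> X \<in> Ob C"
  and Hom_cod_in_Ob: "f \<in> Hom C X Y \<Longrightarrow> Y \<in> Ob C"
  using category unfolding category_def by blast+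

lemma SM_in_Hom: "f \<in> Hom C X Y \<Longrightarrow> SM P f \<in> Hom C (SO P X) (SO P Y)"
  using pre_summability unfolding pre_summability_def endofunctor_def by blast

lemma nat_trans_p0: "nat_trans_to_id C (SO P) (SM P) (p0 P)"
  and nat_trans_p1: "nat_trans_to_id C (SO P) (SM P) (p1 P)"
  and nat_trans_sg: "nat_trans_to_id C (SO P) (SM P) (sg P)"
  using pre_summability unfolding pre_summability_def by blast+

lemma nat_trans_in_Hom:
  "nat_trans_to_id C (SO P) (SM P) \<eta> \<Longrightarrow> X \<in> Ob C \<Longrightarrow> \<eta> X \<in> Hom C (SO P X) X"
  unfolding nat_trans_to_id_def by blast

lemma p0_in_Hom: "X \<in> Ob C \<Longrightarrow> p0 P X \<in> Hom C (SO P X) X"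
  and p1_in_Hom: "X \<in> Ob C \<Longrightarrow> p1 P X \<in> Hom C (SO P X) X"
  and sg_in_Hom: "X \<in> Ob C \<Longrightarrow> sg P X \<in> Hom C (SO P X) X"
  using nat_trans_p0 nat_trans_p1 nat_trans_sg by (simp_all add: nat_trans_in_Hom)

lemma jointly_monic:
  "f \<in> Hom C Y (SO P X) \<Longrightarrow> g \<in> Hom C Y (SO P X) \<Longrightarrow>
    cmp C (p0 P X) f = cmp C (p0 P X) g \<Longrightarrow> cmp C (p1 P X) f = cmp C (p1 P X) g \<Longrightarrow> f = g"
  using pre_summability unfolding pre_summability_def by blast


lemma nat_trans_cmp_SM:
  assumes \<eta>: "nat_trans_to_id C (SO P) (SM P) \<eta>"
    and q: "q \<in> Hom C X Y" and h: "h \<in> Hom C Z (SO P X)"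
  shows "cmp C (\<eta> Y) (cmp C (SM P q) h) = cmp C q (cmp C (\<eta> X) h)"
proof -
  have "X \<in> Ob C" "Y \<in> Ob C"
    using q by (rule Hom_dom_in_Ob, rule Hom_cod_in_Ob)
  then have \<eta>X: "\<eta> X \<in> Hom C (SO P X) X" and \<eta>Y: "\<eta> Y \<in> Hom C (SO P Y) Y"
    using \<eta> nat_trans_in_Hom by blast+
  have "cmp C (\<eta> Y) (cmp C (SM P q) h) = cmp C (cmp C (\<eta> Y) (SM P q)) h"
    using h SM_in_Hom[OF q] \<eta>Y by (rule cmp_assoc)
  also have "cmp C (\<eta> Y) (SM P q) = cmp C q (\<eta> X)"
    using \<eta> q unfolding nat_trans_to_id_def by blast
  also have "cmp C (cmp C q (\<eta> X)) h = cmp C q (cmp C (\<eta> X) h)"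
    using h \<eta>X q by (rule cmp_assoc[symmetric])
  finally show ?thesis .
qed

lemma witness_eqI:
  assumes "h \<in> Hom C X (SO P Y)" "cmp C (p0 P Y) h = f0" "cmp C (p1 P Y) h = f1"
  shows "witness C P X Y f0 f1 = h"
  unfolding witness_def
proof (rule the_equality)
  fix k
  assume "k \<in> Hom C X (SO P Y) \<and> cmp C (p0 P Y) k = f0 \<and> cmp C (p1 P Y) k = f1"
  with assms show "k = h"
    by (auto intro: jointly_monic[of k _ _ h])
qed (use assms in blast)

lemma summable_witness:
  assumes "summable C P X Y f0 f1"
  shows "witness C P X Y f0 f1 \<in> Hom C X (SO P Y)"
    and "cmp C (p0 P Y) (witness C P X Y f0 f1) = f0"
    and "cmp C (p1 P Y) (witness C P X Y f0 f1) = f1"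
proof -
  obtain h where "h \<in> Hom C X (SO P Y)" "cmp C (p0 P Y) h = f0" "cmp C (p1 P Y) h = f1"
    using assms unfolding summable_def by blast
  moreover from this have "witness C P X Y f0 f1 = h"
    by (rule witness_eqI)
  ultimately show "witness C P X Y f0 f1 \<in> Hom C X (SO P Y)"
    "cmp C (p0 P Y) (witness C P X Y f0 f1) = f0"
    "cmp C (p1 P Y) (witness C P X Y f0 f1) = f1"
    by simp_all
qed

lemma summable_projections:
  assumes h: "h \<in> Hom C X (SO P Y)" and Y: "Y \<in> Ob C"
  shows "summable C P X Y (cmp C (p0 P Y) h) (cmp C (p1 P Y) h)"
    and "witness C P X Y (cmp C (p0 P Y) h) (cmp C (p1 P Y) h) = h"
proof -
  from h Y show "summable C P X Y (cmp C (p0 P Y) h) (cmp C (p1 P Y) h)"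
    unfolding summable_def by (blast intro: cmp_in_Hom p0_in_Hom p1_in_Hom)
  show "witness C P X Y (cmp C (p0 P Y) h) (cmp C (p1 P Y) h) = h"
    using h by (simp add: witness_eqI)
qed

lemma psum_in_Hom:
  assumes "summable C P X Y f0 f1"
  shows "psum C P X Y f0 f1 \<in> Hom C X Y"
proof -
  have "Y \<in> Ob C"
    using assms Hom_cod_in_Ob unfolding summable_def by blast
  then show ?thesis
    unfolding psum_def
    using summable_witness(1)[OF assms] sg_in_Hom cmp_in_Hom by blast
qed

lemma summable_cmp:
  assumes s: "summable C P X Y f0 f1" and q: "q \<in> Hom C Y Y'"
  shows "summable C P X Y' (cmp C q f0) (cmp C q f1)"
    and "psum C P X Y' (cmp C q f0) (cmp C q f1) = cmp C q (psum C P X Y f0 f1)"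
proof -
  let ?w = "witness C P X Y f0 f1"
  have w: "?w \<in> Hom C X (SO P Y)"
    using s by (rule summable_witness)
  have Y': "Y' \<in> Ob C"
    using q by (rule Hom_cod_in_Ob)
  have Sw: "cmp C (SM P q) ?w \<in> Hom C X (SO P Y')"
    using w q by (blast intro: cmp_in_Hom SM_in_Hom)
  have proj0: "cmp C (p0 P Y') (cmp C (SM P q) ?w) = cmp C q f0"
    using nat_trans_cmp_SM[OF nat_trans_p0 q w] summable_witness(2)[OF s] by simp
  have proj1: "cmp C (p1 P Y') (cmp C (SM P q) ?w) = cmp C q f1"
    using nat_trans_cmp_SM[OF nat_trans_p1 q w] summable_witness(3)[OF s] by simp
  show "summable C P X Y' (cmp C q f0) (cmp C q f1)"
    using summable_projections(1)[OF Sw Y'] by (simp add: proj0 proj1)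
  have "witness C P X Y' (cmp C q f0) (cmp C q f1) = cmp C (SM P q) ?w"
    using Sw proj0 proj1 by (rule witness_eqI)
  then show "psum C P X Y' (cmp C q f0) (cmp C q f1) = cmp C q (psum C P X Y f0 f1)"
    unfolding psum_def using nat_trans_cmp_SM[OF nat_trans_sg q w] by simp
qed

end

theorem mainTheorem1:
  fixes C :: "('o, 'm) cat" and P :: "('o, 'm) presum_data"
    and Z Y :: 'o and f0 f1 g0 g1 :: 'm
  assumes "category C"
    and "pre_summability C P"
    and "Z \<in> Ob C" and "Y \<in> Ob C"
    and "f0 \<in> Hom C Z Y" and "f1 \<in> Hom C Z Y" and "g0 \<in> Hom C Z Y" and "g1 \<in> Hom C Z Y"
    and "summable C P Z Y f0 f1"
    and "summable C P Z Y g0 g1"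
    and "summable C P Z (SO P Y) (witness C P Z Y f0 f1) (witness C P Z Y g0 g1)"
  shows "summable C P Z Y f0 g0 \<and> summable C P Z Y f1 g1 \<and>
         summable C P Z Y (psum C P Z Y f0 g0) (psum C P Z Y f1 g1) \<and>
         psum C P Z (SO P Y) (witness C P Z Y f0 f1) (witness C P Z Y g0 g1)
           = witness C P Z Y (psum C P Z Y f0 g0) (psum C P Z Y f1 g1)"
proof -
  interpret pre_summable_category C P
    using assms(1,2) by unfold_locales
  let ?f = "witness C P Z Y f0 f1" and ?g = "witness C P Z Y g0 g1"
  let ?s = "psum C P Z (SO P Y) ?f ?g"
  have s: "?s \<in> Hom C Z (SO P Y)"
    using assms(11) by (rule psum_in_Hom)
  have p0: "p0 P Y \<in> Hom C (SO P Y) Y" and p1: "p1 P Y \<in> Hom C (SO P Y) Y"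
    using assms(4) by (rule p0_in_Hom, rule p1_in_Hom)
  have "summable C P Z Y f0 g0" "psum C P Z Y f0 g0 = cmp C (p0 P Y) ?s"
    using summable_cmp[OF assms(11) p0] summable_witness(2)[OF assms(9)]
      summable_witness(2)[OF assms(10)] by simp_all
  moreover have "summable C P Z Y f1 g1" "psum C P Z Y f1 g1 = cmp C (p1 P Y) ?s"
    using summable_cmp[OF assms(11) p1] summable_witness(3)[OF assms(9)]
      summable_witness(3)[OF assms(10)] by simp_all
  ultimately show ?thesis
    using summable_projections[OF s assms(4)] by simp
qed

end
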